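(* In the setting of the flag $\mathcal{F}=(\mathcal{F}_1,\dots,\mathcal{F}_r)$, $r\ge2$, with $\mathcal{F}_i=\bigoplus_{j=0}^{s_i-1}\mathbb{F}_{q^m}\alpha^{lj}$ and $1\le s_1<\dots<s_r<s=n/m$, assume $L=s$. Then: (1) $\mathcal{F}$ is a generalized Galois flag (so $\mathrm{Orb}(\mathcal{F})$ is a generalized Galois flag code) if and only if $s_1=1$. (2) If $r=2$, $s_1=1$ and $s_2=L-1$, then $\mathrm{Orb}(\mathcal{F})$ is an optimum distance generalized Galois flag code of type $(m,n-m)$ (distance $4m$) with cardinality $\frac{q^n-1}{q^m-1}$, the largest possible for cyclic orbit flag codes with best friend $\mathbb{F}_{q^m}$.
   Context: $q$ prime power; $m$ divides $n$; $\alpha$ is a primitive element of $\mathbb{F}_{q^n}$; $l$ is an integer with $1\le l<\frac{q^n-1}{q^m-1}$; $L$ is the degree of the minimal polynomial of $\alpha^l$ over $\mathbb{F}_{q^m}$. Subspaces are $\mathbb{F}_q$-subspaces of $\mathbb{F}_{q^n}$; a flag is a chain $\{0\}\subsetneq\mathcal{F}_1\subsetneq\cdots\subsetneq\mathcal{F}_r\subsetneq\mathbb{F}_{q^n}$ with type its vector of dimensions. $d_S(\mathcal{U},\mathcal{V})=\dim(\mathcal{U}+\mathcal{V})-\dim(\mathcal{U}\cap\mathcal{V})$, $d_f(\mathcal{F},\mathcal{F}')=\sum_i d_S(\mathcal{F}_i,\mathcal{F}'_i)$, $\mathrm{Orb}(\mathcal{F})=\{\mathcal{F}\alpha^j:j\ge0\}$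 with $\mathcal{F}\alpha^j=(\mathcal{F}_1\alpha^j,\dots)$, and the minimum distance of a code is the minimum $d_f$ between distinct codewords. A flag code of type $(t_1,\dots,t_r)$ is an optimum distance flag code if its minimum distance equals $2(\sum_{t_i\le\lfloor n/2\rfloor}t_i+\sum_{t_i>\lfloor n/2\rfloor}(n-t_i))$. A generalized Galois flag is a flag having at least one subspace that is a subfield of $\mathbb{F}_{q^n}$ and at least one subspace that is not a subfield, such that its subspaces that are subfields form a chain of subfields (a Galois subflag). *)

theory Defs
  imports "HOL-Computational_Algebra.Polynomial" "HOL-Computational_Algebra.Primes"
begin

definition prime_power :: "nat \<Rightarrow> bool" where
  "prime_power q \<longleftrightarrow> (\<exists>p k. prime p \<and> k > 0 \<and> q = p ^ k)"

text \<open>Inside a field with q^n elements, the subfield with q^k elements (k dvd n).\<close>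
definition Fsub :: "nat \<Rightarrow> nat \<Rightarrow> 'a::field set" where
  "Fsub q k = {x. x ^ (q ^ k) = x}"

definition is_subfield :: "'a::field set \<Rightarrow> bool" where
  "is_subfield K \<longleftrightarrow> 0 \<in> K \<and> 1 \<in> K \<and> (\<forall>x\<in>K. \<forall>y\<in>K. x + y \<in> K \<and> x * y \<in> K)
     \<and> (\<forall>x\<in>K. - x \<in> K \<and> inverse x \<in> K)"

definition primitive_elem :: "'a::field \<Rightarrow> bool" where
  "primitive_elem a \<longleftrightarrow> range (\<lambda>k::nat. a ^ k) = UNIV - {0}"

definition minpoly_degree :: "'a::field set \<Rightarrow> 'a \<Rightarrow> nat" where
  "minpoly_degree K b = (LEAST d. \<exists>p. p \<noteq> 0 \<and> (\<forall>i. coeff p i \<in> K) \<and> poly p b = 0 \<and> degree p = d)"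

definition is_subspace :: "nat \<Rightarrow> 'a::field set \<Rightarrow> bool" where
  "is_subspace q V \<longleftrightarrow> 0 \<in> V \<and> (\<forall>u\<in>V. \<forall>v\<in>V. u + v \<in> V) \<and> (\<forall>c\<in>Fsub q 1. \<forall>v\<in>V. c * v \<in> V)"

definition sdim :: "nat \<Rightarrow> 'a set \<Rightarrow> nat" where
  "sdim q V = (THE k. card V = q ^ k)"

definition ssum :: "'a::plus set \<Rightarrow> 'a set \<Rightarrow> 'a set" where
  "ssum U V = {u + v | u v. u \<in> U \<and> v \<in> V}"

definition subspace_dist :: "nat \<Rightarrow> 'a::plus set \<Rightarrow> 'a set \<Rightarrow> nat" where
  "subspace_dist q U V = sdim q (ssum U V) - sdim q (U \<inter> V)"

definition is_flag :: "nat \<Rightarrow> 'a::field set list \<Rightarrow> bool" where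
  "is_flag q F \<longleftrightarrow> F \<noteq> [] \<and> (\<forall>V\<in>set F. is_subspace q V) \<and> {0} \<subset> hd F \<and> last F \<subset> UNIV
     \<and> sorted_wrt (\<subset>) F"

definition flag_type :: "nat \<Rightarrow> 'a set list \<Rightarrow> nat list" where
  "flag_type q F = map (sdim q) F"

definition flag_dist :: "nat \<Rightarrow> 'a::plus set list \<Rightarrow> 'a set list \<Rightarrow> nat" where
  "flag_dist q F G = (\<Sum>i<length F. subspace_dist q (F ! i) (G ! i))"

definition min_dist :: "nat \<Rightarrow> 'a::plus set list set \<Rightarrow> nat" where
  "min_dist q C = Min {flag_dist q F G | F G. F \<in> C \<and> G \<in> C \<and> F \<noteq> G}"

definition Orb :: "'a::field \<Rightarrow> 'a set list \<Rightarrow> 'a set list set" where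
  "Orb a F = {map (\<lambda>V. (\<lambda>x. x * a ^ j) ` V) F | j::nat. True}"

definition odfc_bound :: "nat \<Rightarrow> nat list \<Rightarrow> nat" where
  "odfc_bound n ts = 2 * sum_list (map (\<lambda>t. if t \<le> n div 2 then t else n - t) ts)"

definition optimum_distance_flag_code :: "nat \<Rightarrow> nat \<Rightarrow> 'a::plus set list set \<Rightarrow> nat list \<Rightarrow> bool" where
  "optimum_distance_flag_code q n C ts \<longleftrightarrow>
     (\<forall>F\<in>C. flag_type q F = ts) \<and> min_dist q C = odfc_bound n ts"

definition gen_galois_flag :: "nat \<Rightarrow> 'a::field set list \<Rightarrow> bool" where
  "gen_galois_flag q F \<longleftrightarrow> is_flag q F \<and> (\<exists>V\<in>set F. is_subfield V) \<and> (\<exists>V\<in>set F. \<not> is_subfield V)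
     \<and> (\<forall>U\<in>set F. \<forall>V\<in>set F. is_subfield U \<and> is_subfield V \<longrightarrow> U \<subseteq> V \<or> V \<subseteq> U)"

definition best_friend :: "'a::field set \<Rightarrow> 'a set list \<Rightarrow> bool" where
  "best_friend K F \<longleftrightarrow> is_subfield K \<and> (\<forall>V\<in>set F. \<forall>k\<in>K. \<forall>v\<in>V. k * v \<in> V)
     \<and> (\<forall>K'. is_subfield K' \<and> (\<forall>V\<in>set F. \<forall>k\<in>K'. \<forall>v\<in>V. k * v \<in> V) \<longrightarrow> K' \<subseteq> K)"

definition pow_span :: "'a::field set \<Rightarrow> 'a \<Rightarrow> nat \<Rightarrow> nat \<Rightarrow> 'a set" where
  "pow_span K a l si = {\<Sum>j<si. c j * a ^ (l * j) | c. \<forall>j. c j \<in> K}"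

definition the_flag :: "nat \<Rightarrow> nat \<Rightarrow> 'a::field \<Rightarrow> nat \<Rightarrow> nat list \<Rightarrow> 'a set list" where
  "the_flag q m a l ss = map (pow_span (Fsub q m) a l) ss"

end

theory Submission
  imports Defs "HOL-Number_Theory.Residues"
begin

text \<open>
  Write K for the subfield with q^m elements and b = \<alpha>^l. Because the minimal polynomial of b
  over K has degree s = n/m, the powers 1, b, ..., b^(s-1) are K-linearly independent, so the
  i-th subspace of the flag is a K-space with q^(m s_i) elements; it is a subfield exactly when
  s_i = 1 (it then equals K), since otherwise it contains b and b^(s_i - 1) but not their product.
  Multiplying by \<alpha>^T, T = (q^n-1)/(q^m-1), is multiplication by a generator of K^*, which fixes
  every K-space; hence every orbit of a flag of K-spaces has at most T elements.
  For the flag (K, W) with W the K-hyperplane spanned by 1, ..., b^(s-2), two distinct codewords are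
  (Ku, Wu) and (Kv, Wv) with u/v not in K. Then Ku \<inter> Kv = 0, and Wu \<noteq> Wv because a K-hyperplane
  is never stable under multiplication by an element outside K; so both subspace distances are 2m.
\<close>

lemma card_ssum_mult_card_inter:
  fixes U V :: "'a::ab_group_add set"
  assumes fU: "finite U" and fV: "finite V"
    and U: "\<And>x y. x \<in> U \<Longrightarrow> y \<in> U \<Longrightarrow> x + y \<in> U" "\<And>x. x \<in> U \<Longrightarrow> - x \<in> U"
    and V: "\<And>x y. x \<in> V \<Longrightarrow> y \<in> V \<Longrightarrow> x + y \<in> V" "\<And>x. x \<in> V \<Longrightarrow> - x \<in> V"
  shows "card (ssum U V) * card (U \<inter> V) = card U * card V"
proof -
  define fibre where "fibre x = {(u, v). u \<in> U \<and> v \<in> V \<and> u + v = x}" for x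
  have UV: "U \<times> V = (\<Union>x\<in>ssum U V. fibre x)"
    unfolding fibre_def ssum_def by auto
  have "ssum U V = (\<lambda>(u, v). u + v) ` (U \<times> V)"
    unfolding ssum_def by auto
  then have finite_ssum: "finite (ssum U V)"
    using fU fV by simp
  have finite_fibre: "finite (fibre x)" for x
    by (rule finite_subset[of _ "U \<times> V"]) (auto simp: fibre_def fU fV)
  have card_fibre: "card (fibre x) = card (U \<inter> V)" if "x \<in> ssum U V" for x
  proof -
    from that obtain u0 v0 where u0: "u0 \<in> U" and v0: "v0 \<in> V" and x: "x = u0 + v0"
      unfolding ssum_def by auto
    have diff_U: "u - u' \<in> U" if "u \<in> U" "u' \<in> U" for u u'
      using U that by (metis diff_conv_add_uminus)
    have diff_V: "v - v' \<in> V" if "v \<in> V" "v' \<in> V" for v v'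
      using V that by (metis diff_conv_add_uminus)
    have "fibre x = (\<lambda>d. (u0 + d, v0 - d)) ` (U \<inter> V)"
    proof (intro subset_antisym subsetI)
      fix z assume "z \<in> fibre x"
      then obtain u v where z: "z = (u, v)" "u \<in> U" "v \<in> V" "u + v = x"
        unfolding fibre_def by auto
      have "u - u0 = v0 - v"
        using z x by (simp add: algebra_simps)
      then have "u - u0 \<in> U \<inter> V"
        using diff_U[OF z(2) u0] diff_V[OF v0 z(3)] by simp
      moreover have "z = (u0 + (u - u0), v0 - (u - u0))"
        using z x by (simp add: algebra_simps)
      ultimately show "z \<in> (\<lambda>d. (u0 + d, v0 - d)) ` (U \<inter> V)"
        by blast
    next
      fix z assume "z \<in> (\<lambda>d. (u0 + d, v0 - d)) ` (U \<inter> V)"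
      then obtain d where "d \<in> U" "d \<in> V" "z = (u0 + d, v0 - d)"
        by auto
      then show "z \<in> fibre x"
        using U(1) u0 diff_V[OF v0] x unfolding fibre_def by auto
    qed
    moreover have "inj_on (\<lambda>d. (u0 + d, v0 - d)) (U \<inter> V)"
      by (auto intro: inj_onI)
    ultimately show ?thesis
      by (simp add: card_image)
  qed
  have "card U * card V = card (U \<times> V)"
    by (simp add: card_cartesian_product)
  also have "\<dots> = (\<Sum>x\<in>ssum U V. card (fibre x))"
    unfolding UV by (rule card_UN_disjoint) (use finite_ssum finite_fibre in \<open>auto simp: fibre_def\<close>)
  also have "\<dots> = card (ssum U V) * card (U \<inter> V)"
    using card_fibre by simp
  finally show ?thesis ..
qed

lemma sdim_eqI:
  assumes "q \<ge> 2" and "card V = q ^ k"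
  shows "sdim q V = k"
  unfolding sdim_def
proof (rule the_equality)
  fix k' assume "card V = q ^ k'"
  with assms show "k' = k"
    by (metis Suc_1 Suc_le_lessD power_inject_exp)
qed (fact assms(2))

lemma prime_power_ge_2: "prime_power q \<Longrightarrow> q \<ge> 2"
  unfolding prime_power_def
  by (metis one_less_power prime_gt_1_nat Suc_1 Suc_leI)

lemma freshmans_dream_prime_power:
  fixes x y :: "'a::{finite,field}"
  assumes "prime_power q" and "card (UNIV :: 'a set) = q ^ n"
  shows "(x + y) ^ (q ^ j) = x ^ (q ^ j) + y ^ (q ^ j)"
proof -
  obtain p k where p: "prime p" and q: "q = p ^ k"
    using assms(1) unfolding prime_power_def by auto
  have char_prime: "prime CHAR('a)"
    using prime_CHAR_semidom finite_imp_CHAR_pos[OF finite_UNIV] by blast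
  have "CHAR('a) dvd p ^ (k * n)"
    using CHAR_dvd_CARD[where 'a = 'a] assms(2) q by (simp add: power_mult)
  then have "CHAR('a) = p"
    using char_prime p prime_dvd_power primes_dvd_imp_eq by blast
  then have "q ^ j = CHAR('a) ^ (k * j)"
    using q by (simp add: power_mult)
  then show ?thesis
    using freshmans_dream'[OF char_prime] by blast
qed

lemma is_subfield_Fsub:
  assumes "prime_power q" and "card (UNIV :: 'a::{finite,field} set) = q ^ n"
  shows "is_subfield (Fsub q k :: 'a set)"
proof -
  have add: "x + y \<in> Fsub q k" if "x \<in> Fsub q k" "y \<in> Fsub q k" for x y :: 'a
    using that freshmans_dream_prime_power[OF assms] by (simp add: Fsub_def)
  have "(x + - x) ^ (q ^ k) = 0" for x :: 'a
    using prime_power_ge_2[OF assms(1)] by simp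
  then have uminus: "(- x) ^ (q ^ k) = - (x ^ (q ^ k))" for x :: 'a
    by (metis freshmans_dream_prime_power[OF assms] add_eq_0_iff)
  show ?thesis
    unfolding is_subfield_def
    using add prime_power_ge_2[OF assms(1)]
    by (simp add: Fsub_def uminus power_mult_distrib power_inverse)
qed

lemma Fsub_1_subset: "Fsub q 1 \<subseteq> Fsub q k"
proof
  fix x assume "x \<in> Fsub q 1"
  then have x: "x ^ q = x"
    by (simp add: Fsub_def)
  have "x ^ (q ^ j) = x" for j
    by (induction j) (simp_all add: power_mult x)
  then show "x \<in> Fsub q k"
    by (simp add: Fsub_def)
qed

lemma primitive_elem_nonzero: "primitive_elem a \<Longrightarrow> a \<noteq> 0"
  unfolding primitive_elem_def by (metis Diff_iff imageI insertI1 power_one_right UNIV_I)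

lemma primitive_elem_powE:
  assumes "primitive_elem a" and "x \<noteq> 0"
  obtains k where "x = a ^ k"
  using assms unfolding primitive_elem_def by (metis DiffI UNIV_I imageE singletonD)

lemma power_eq_power_mod:
  fixes x :: "'a::monoid_mult"
  assumes "x ^ d = 1"
  shows "x ^ e = x ^ (e mod d)"
proof -
  have "x ^ e = (x ^ d) ^ (e div d) * x ^ (e mod d)"
    by (simp flip: power_mult power_add)
  then show ?thesis
    using assms by simp
qed

lemma primitive_elem_pow_eq_1_iff:
  fixes a :: "'a::{finite,field}"
  assumes prim: "primitive_elem a"
  shows "a ^ e = 1 \<longleftrightarrow> (card (UNIV :: 'a set) - 1) dvd e"
proof -
  have a0: "a \<noteq> 0"
    using prim by (rule primitive_elem_nonzero)
  have period: "a ^ (j - i) = 1" if "i < j" "a ^ i = a ^ j" for i j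
  proof -
    have "a ^ j = a ^ i * a ^ (j - i)"
      using that(1) by (simp flip: power_add)
    then show ?thesis
      using that(2) a0 by simp
  qed
  have "\<not> inj (\<lambda>k::nat. a ^ k)"
    using finite_imageD[of "\<lambda>k::nat. a ^ k" UNIV] by auto
  then obtain i j :: nat where "i < j" "a ^ i = a ^ j"
    unfolding inj_def by (metis linorder_neqE_nat)
  then have ex: "\<exists>d>0. a ^ d = 1"
    using period by (intro exI[of _ "j - i"]) auto
  define d where "d = (LEAST d. d > 0 \<and> a ^ d = 1)"
  have d: "d > 0" "a ^ d = 1"
    using LeastI_ex[OF ex] unfolding d_def by auto
  have d_least: "a ^ e \<noteq> 1" if "0 < e" "e < d" for e
    using not_less_Least[of e] that unfolding d_def by blast
  have pow_mod: "a ^ e = a ^ (e mod d)" for e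
    using d(2) by (rule power_eq_power_mod)
  have inj: "inj_on (\<lambda>k. a ^ k) {..<d}"
  proof (rule linorder_inj_onI)
    fix i j assume "i < j" "i \<in> {..<d}" "j \<in> {..<d}"
    then show "a ^ i \<noteq> a ^ j"
      using period[of i j] d_least[of "j - i"] by auto
  qed auto
  have "range (\<lambda>k::nat. a ^ k) = (\<lambda>k. a ^ k) ` {..<d}"
  proof (intro subset_antisym subsetI)
    fix x assume "x \<in> range (\<lambda>k::nat. a ^ k)"
    then obtain k where "x = a ^ (k mod d)"
      using pow_mod by auto
    then show "x \<in> (\<lambda>k. a ^ k) ` {..<d}"
      using d(1) by auto
  qed auto
  then have "card (UNIV - {0 :: 'a}) = card ((\<lambda>k. a ^ k) ` {..<d})"
    using prim unfolding primitive_elem_def by simp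
  then have "d = card (UNIV - {0 :: 'a})"
    using inj by (simp add: card_image)
  also have "\<dots> = card (UNIV :: 'a set) - 1"
    by (simp add: card_Diff_singleton)
  finally have "d = card (UNIV :: 'a set) - 1" .
  moreover have "a ^ e = 1 \<longleftrightarrow> e mod d = 0"
    using pow_mod[of e] d d_least[of "e mod d"] by (cases "e mod d = 0") auto
  ultimately show ?thesis
    by (simp add: dvd_eq_mod_eq_0)
qed

lemma subfield_zero: "is_subfield K \<Longrightarrow> 0 \<in> K"
  and subfield_one: "is_subfield K \<Longrightarrow> 1 \<in> K"
  and subfield_add: "is_subfield K \<Longrightarrow> x \<in> K \<Longrightarrow> y \<in> K \<Longrightarrow> x + y \<in> K"
  and subfield_mult: "is_subfield K \<Longrightarrow> x \<in> K \<Longrightarrow> y \<in> K \<Longrightarrow> x * y \<in> K"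
  and subfield_uminus: "is_subfield K \<Longrightarrow> x \<in> K \<Longrightarrow> - x \<in> K"
  and subfield_inverse: "is_subfield K \<Longrightarrow> x \<in> K \<Longrightarrow> inverse x \<in> K"
  by (simp_all add: is_subfield_def)

lemma subfield_diff:
  fixes x y :: "'a::field"
  shows "is_subfield K \<Longrightarrow> x \<in> K \<Longrightarrow> y \<in> K \<Longrightarrow> x - y \<in> K"
  using subfield_add[of K x "- y"] subfield_uminus[of K y] by simp

definition scale :: "'a::times \<Rightarrow> 'a set \<Rightarrow> 'a set" where
  "scale u V = (\<lambda>x. x * u) ` V"

definition scalar_closed :: "'a::times set \<Rightarrow> 'a set \<Rightarrow> bool" where
  "scalar_closed K V \<longleftrightarrow> (\<forall>k\<in>K. \<forall>v\<in>V. k * v \<in> V)"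

definition subspace_over :: "'a::{times,plus,zero} set \<Rightarrow> 'a set \<Rightarrow> bool" where
  "subspace_over K V \<longleftrightarrow> 0 \<in> V \<and> (\<forall>x\<in>V. \<forall>y\<in>V. x + y \<in> V) \<and> scalar_closed K V"

lemma ssum_commute: "ssum U V = ssum V (U :: 'a::ab_semigroup_add set)"
  unfolding ssum_def by (metis add.commute)

lemma Orb_eq_image_scale: "Orb a G = (\<lambda>j. map (scale (a ^ j)) G) ` UNIV"
  unfolding Orb_def scale_def by auto

lemma card_scale: "u \<noteq> 0 \<Longrightarrow> card (scale u V) = card (V :: 'a::field set)"
  unfolding scale_def by (rule card_image) (rule inj_onI, simp)

lemma scale_scale: "scale u (scale v V) = scale (v * u) (V :: 'a::field set)"
  unfolding scale_def image_image by (simp add: mult.assoc)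

lemma scale_eq_self:
  fixes V :: "'a::field set"
  assumes "finite V" and "w \<noteq> 0" and "\<forall>y\<in>V. y * w \<in> V"
  shows "scale w V = V"
  using assms card_scale[of w V] by (intro card_subset_eq) (auto simp: scale_def)

lemma scale_eq_imp_closed:
  fixes V :: "'a::field set"
  assumes "scale u V = scale v V" and "v \<noteq> 0" and "y \<in> V"
  shows "y * (u / v) \<in> V"
proof -
  have "y * u \<in> scale v V"
    using assms(1,3) unfolding scale_def by blast
  then obtain y' where "y' \<in> V" "y * u = y' * v"
    unfolding scale_def by blast
  then show ?thesis
    using assms(2) by (simp add: field_simps)
qed

lemma scale_mult_subfield_elem:
  fixes V :: "'a::{finite,field} set"
  assumes "scalar_closed K V" and "w \<in> K" and "w \<noteq> 0"
  shows "scale (w * v) V = scale v V"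
proof -
  have "\<forall>y\<in>V. y * w \<in> V"
    using assms(1,2) unfolding scalar_closed_def by (metis mult.commute)
  then have "scale w V = V"
    using assms(3) by (intro scale_eq_self) auto
  then show ?thesis
    by (metis scale_scale)
qed

lemma map_scale_eq_if_div_mem:
  fixes G :: "'a::{finite,field} set list"
  assumes "\<forall>V\<in>set G. scalar_closed K V" and "u / v \<in> K" and "u \<noteq> 0" and "v \<noteq> 0"
  shows "map (scale u) G = map (scale v) G"
proof -
  have "u = (u / v) * v"
    using assms(4) by simp
  then show ?thesis
    using assms scale_mult_subfield_elem[of K _ "u / v" v] by (intro map_cong) auto
qed

lemma subspace_over_uminus:
  assumes "is_subfield K" and "subspace_over K V" and "x \<in> V"
  shows "- x \<in> V"
  using assms subfield_uminus[OF assms(1) subfield_one[OF assms(1)]]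
  unfolding subspace_over_def scalar_closed_def by (metis mult_minus1)

lemma subspace_over_scale:
  fixes V :: "'a::field set"
  assumes "subspace_over K V"
  shows "subspace_over K (scale u V)"
proof -
  have "x * u + y * u \<in> scale u V" if "x \<in> V" "y \<in> V" for x y
    using assms that unfolding subspace_over_def scale_def
    by (auto simp flip: distrib_right)
  moreover have "k * (x * u) \<in> scale u V" if "k \<in> K" "x \<in> V" for k x
    using assms that unfolding subspace_over_def scalar_closed_def scale_def
    by (auto simp flip: mult.assoc)
  moreover have "0 \<in> scale u V"
    using assms unfolding subspace_over_def scale_def by force
  ultimately show ?thesis
    unfolding subspace_over_def scalar_closed_def by (auto simp: scale_def)
qed

lemma subspace_over_subfield: "is_subfield K \<Longrightarrow> subspace_over K K"
  unfolding subspace_over_def scalar_closed_def by (simp add: subfield_zero subfield_add subfield_mult)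

lemma card_ssum_mult_card_inter_subspace_over:
  fixes U V :: "'a::field set"
  assumes "is_subfield K" and "finite U" and "finite V"
    and "subspace_over K U" and "subspace_over K V"
  shows "card (ssum U V) * card (U \<inter> V) = card U * card V"
  using assms subspace_over_uminus[OF assms(1)]
  by (intro card_ssum_mult_card_inter) (auto simp: subspace_over_def)

lemma inter_scale_subfield_eq_zero:
  fixes U :: "'a::field set"
  assumes K: "is_subfield K" and U: "subspace_over K U" and z: "z \<notin> U"
  shows "U \<inter> scale z K = {0}"
proof (intro subset_antisym subsetI)
  fix x assume "x \<in> U \<inter> scale z K"
  then obtain k where x: "x \<in> U" "k \<in> K" "x = k * z"
    unfolding scale_def by (auto simp: mult.commute)
  show "x \<in> {0}"
  proof (rule ccontr)
    assume "x \<notin> {0}"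
    then have "z = inverse k * x"
      using x by simp
    moreover have "inverse k \<in> K"
      using K x(2) by (rule subfield_inverse)
    ultimately show False
      using U x(1) z unfolding subspace_over_def scalar_closed_def by metis
  qed
qed (use subfield_zero[OF K] U in \<open>auto simp: subspace_over_def scale_def\<close>)

lemma card_ssum_scale_subfield:
  fixes U :: "'a::{finite,field} set"
  assumes K: "is_subfield K" and U: "subspace_over K U" and z: "z \<notin> U"
  shows "card (ssum U (scale z K)) = card U * card K"
proof -
  have z0: "z \<noteq> 0"
    using U z unfolding subspace_over_def by auto
  have "subspace_over K (scale z K)"
    using subspace_over_scale subspace_over_subfield K by blast
  then have "card (ssum U (scale z K)) * card (U \<inter> scale z K) = card U * card (scale z K)"
    using K U by (intro card_ssum_mult_card_inter_subspace_over) auto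
  then show ?thesis
    using inter_scale_subfield_eq_zero[OF K U z] card_scale[OF z0] by simp
qed

text \<open>
  If W w \<subseteq> W, then the elements c x0 + y with c \<in> K \<union> {w}, y \<in> W and a fixed x0 \<notin> W are
  pairwise distinct, so (|K| + 1) |W| \<le> |K| |W|.
\<close>

lemma hyperplane_not_mult_closed:
  fixes W :: "'a::{finite,field} set"
  assumes K: "is_subfield K" and W: "subspace_over K W"
    and card_UNIV: "card (UNIV :: 'a set) = card K * card W" and w: "w \<notin> K"
  shows "\<exists>y\<in>W. y * w \<notin> W"
proof (rule ccontr)
  assume "\<not> ?thesis"
  then have closed_w: "\<forall>y\<in>W. y * w \<in> W"
    by blast
  have diff: "x - y \<in> W" if "x \<in> W" "y \<in> W" for x y
    using W subspace_over_uminus[OF K W that(2)] that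
    unfolding subspace_over_def by (metis diff_conv_add_uminus)
  define D where "D = insert w K"
  have closed_D: "y * c \<in> W" if "c \<in> D" "y \<in> W" for c y
    using that closed_w W unfolding D_def subspace_over_def scalar_closed_def
    by (auto simp: mult.commute)
  have "{0, 1} \<subseteq> K"
    using subfield_zero[OF K] subfield_one[OF K] by blast
  then have "card K \<ge> 2"
    using card_mono[of K "{0, 1}"] by simp
  moreover have "card W > 0"
    using W unfolding subspace_over_def by (auto simp: card_gt_0_iff)
  ultimately have "card W < card (UNIV :: 'a set)"
    using card_UNIV by (simp add: mult_less_cancel2)
  then obtain x0 where x0: "x0 \<notin> W"
    by (metis UNIV_I card_mono finite less_le_not_le subsetI)
  have "inj_on (\<lambda>(c, y). c * x0 + y) (D \<times> W)"
  proof (rule inj_onI, clarify)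
    fix c y c' y'
    assume c: "c \<in> D" "y \<in> W" and c': "c' \<in> D" "y' \<in> W"
      and eq: "c * x0 + y = c' * x0 + y'"
    have "c = c'"
    proof (rule ccontr)
      assume ne: "c \<noteq> c'"
      have "\<forall>z\<in>W. z * (c - c') \<in> W"
        using closed_D c c' diff by (simp add: right_diff_distrib)
      then have "scale (c - c') W = W"
        using ne by (intro scale_eq_self) auto
      moreover have "y' - y \<in> W"
        using diff c c' by blast
      ultimately obtain z where "z \<in> W" "y' - y = z * (c - c')"
        unfolding scale_def by auto
      moreover have "y' - y = x0 * (c - c')"
        using eq by (simp add: algebra_simps)
      ultimately show False
        using x0 ne by simp
    qed
    then show "c = c' \<and> y = y'"
      using eq by simp
  qed
  then have "card (D \<times> W) \<le> card (UNIV :: 'a set)"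
    by (rule card_inj_on_le) auto
  moreover have "card D = card K + 1"
    using w unfolding D_def by simp
  ultimately show False
    using card_UNIV \<open>card W > 0\<close> by (simp add: card_cartesian_product)
qed

lemma ssum_distinct_hyperplanes:
  fixes U V :: "'a::{finite,field} set"
  assumes K: "is_subfield K" and U: "subspace_over K U" and V: "subspace_over K V"
    and card_UNIV: "card (UNIV :: 'a set) = card U * card K"
    and card_V: "card V = card U" and ne: "U \<noteq> V"
  shows "ssum U V = UNIV"
proof -
  obtain z where z: "z \<in> V" "z \<notin> U"
    using card_subset_eq[of U V] card_V ne by auto
  have "ssum U (scale z K) \<subseteq> ssum U V"
    using V z(1) unfolding ssum_def scale_def subspace_over_def scalar_closed_def
    by blast
  moreover have "card (ssum U (scale z K)) = card (UNIV :: 'a set)"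
    using card_ssum_scale_subfield[OF K U z(2)] card_UNIV by simp
  ultimately show ?thesis
    by (metis card_mono card_seteq finite subset_UNIV)
qed

lemma pow_span_eq: "pow_span K a l t = {\<Sum>j<t. c j * (a ^ l) ^ j | c. \<forall>j. c j \<in> K}"
  by (simp add: pow_span_def power_mult)

lemma subspace_over_pow_span:
  fixes a :: "'a::field"
  assumes K: "is_subfield K"
  shows "subspace_over K (pow_span K a l t)"
proof -
  have add: "(\<Sum>j<t. c j * (a ^ l) ^ j) + (\<Sum>j<t. d j * (a ^ l) ^ j) \<in> pow_span K a l t"
    if "\<forall>j. c j \<in> K" "\<forall>j. d j \<in> K" for c d
  proof -
    have "(\<Sum>j<t. c j * (a ^ l) ^ j) + (\<Sum>j<t. d j * (a ^ l) ^ j)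
        = (\<Sum>j<t. (c j + d j) * (a ^ l) ^ j)"
      by (simp add: sum.distrib distrib_right)
    then show ?thesis
      unfolding pow_span_eq using that subfield_add[OF K] by (auto intro!: exI[of _ "\<lambda>j. c j + d j"])
  qed
  have smult: "k * (\<Sum>j<t. c j * (a ^ l) ^ j) \<in> pow_span K a l t"
    if "k \<in> K" "\<forall>j. c j \<in> K" for k c
  proof -
    have "k * (\<Sum>j<t. c j * (a ^ l) ^ j) = (\<Sum>j<t. (k * c j) * (a ^ l) ^ j)"
      by (simp add: sum_distrib_left mult.assoc)
    then show ?thesis
      unfolding pow_span_eq using that subfield_mult[OF K] by (auto intro!: exI[of _ "\<lambda>j. k * c j"])
  qed
  have "0 \<in> pow_span K a l t"
    unfolding pow_span_eq using subfield_zero[OF K] by (auto intro!: exI[of _ "\<lambda>_. 0"])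
  then show ?thesis
    unfolding subspace_over_def scalar_closed_def
    using add smult by (auto simp: pow_span_eq)
qed

lemma pow_span_mono:
  assumes "0 \<in> K" and "t \<le> t'"
  shows "pow_span K a l t \<subseteq> pow_span K a l t'"
proof
  fix x assume "x \<in> pow_span K a l t"
  then obtain c where c: "\<forall>j. c j \<in> K" "x = (\<Sum>j<t. c j * (a ^ l) ^ j)"
    unfolding pow_span_eq by blast
  define c' where "c' j = (if j < t then c j else 0)" for j
  have "x = (\<Sum>j<t'. c' j * (a ^ l) ^ j)"
    unfolding c(2) using assms(2) by (intro sum.mono_neutral_cong_left) (auto simp: c'_def)
  moreover have "\<forall>j. c' j \<in> K"
    using c assms(1) by (simp add: c'_def)
  ultimately show "x \<in> pow_span K a l t'"
    unfolding pow_span_eq by blast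
qed

lemma power_in_pow_span:
  fixes a :: "'a::field"
  assumes "0 \<in> K" and "1 \<in> K" and "j < t"
  shows "(a ^ l) ^ j \<in> pow_span K a l t"
proof -
  have "(\<Sum>i<t. (if i = j then 1 else 0) * (a ^ l) ^ i) = (\<Sum>i<t. if i = j then (a ^ l) ^ i else 0)"
    by (rule sum.cong) auto
  also have "\<dots> = (a ^ l) ^ j"
    using assms(3) by simp
  finally have "(\<Sum>i<t. (if i = j then 1 else 0) * (a ^ l) ^ i) = (a ^ l) ^ j" .
  then show ?thesis
    unfolding pow_span_eq using assms(1,2)
    by (intro CollectI exI[of _ "\<lambda>i. if i = j then 1 else 0"]) auto
qed

lemma pow_span_1: "0 \<in> K \<Longrightarrow> pow_span K a l 1 = K"
  unfolding pow_span_eq by (auto intro!: exI[of _ "\<lambda>_. _"])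

lemma strict_sorted_nth_0_le_le_last:
  fixes xs :: "'a::linorder list"
  assumes "sorted_wrt (<) xs" and "x \<in> set xs"
  shows "xs ! 0 \<le> x \<and> x \<le> last xs"
proof -
  obtain i where i: "i < length xs" "x = xs ! i"
    using assms(2) by (auto simp: in_set_conv_nth)
  have "sorted xs"
    using assms(1) by (rule strict_sorted_imp_sorted)
  moreover have "last xs = xs ! (length xs - 1)"
    using i by (intro last_conv_nth) auto
  ultimately show ?thesis
    using i sorted_nth_mono[of xs 0 i] sorted_nth_mono[of xs i "length xs - 1"] by auto
qed

lemma min_dist_eqI:
  assumes "\<And>G H. G \<in> C \<Longrightarrow> H \<in> C \<Longrightarrow> G \<noteq> H \<Longrightarrow> flag_dist q G H = d"
    and "G \<in> C" and "H \<in> C" and "G \<noteq> H"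
  shows "min_dist q C = d"
proof -
  have "{flag_dist q G H | G H. G \<in> C \<and> H \<in> C \<and> G \<noteq> H} = {d}"
    using assms by blast
  then show ?thesis
    unfolding min_dist_def by simp
qed

lemma best_friend_if_subfield_mem:
  assumes "is_subfield K" and "\<forall>V\<in>set G. scalar_closed K V" and "K \<in> set G"
  shows "best_friend K G"
  unfolding best_friend_def
proof (intro conjI allI impI)
  fix K' assume K': "is_subfield K' \<and> (\<forall>V\<in>set G. \<forall>k\<in>K'. \<forall>v\<in>V. k * v \<in> V)"
  then show "K' \<subseteq> K"
    using subfield_one[OF assms(1)] assms(3) by (metis mult_1_right subsetI)
qed (use assms in \<open>auto simp: scalar_closed_def\<close>)

lemma odfc_bound_two_step: "2 * m \<le> n \<Longrightarrow> odfc_bound n [m, n - m] = 4 * m"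
  unfolding odfc_bound_def by auto

locale primitive_field_ext =
  fixes a :: "'a::{finite,field}" and q n m :: nat
  assumes prime_power: "prime_power q" and m_pos: "0 < m" and m_dvd_n: "m dvd n"
    and card_UNIV: "card (UNIV :: 'a set) = q ^ n" and primitive: "primitive_elem a"
begin

abbreviation K :: "'a set" where
  "K \<equiv> Fsub q m"

abbreviation T :: nat where
  "T \<equiv> (q ^ n - 1) div (q ^ m - 1)"

lemma q_ge_2: "q \<ge> 2"
  using prime_power by (rule prime_power_ge_2)

lemma q_pow_m_ge_2: "q ^ m \<ge> 2"
proof -
  have "q ^ 1 \<le> q ^ m"
    using q_ge_2 m_pos by (intro power_increasing) auto
  then show ?thesis
    using q_ge_2 by simp
qed

lemma K_subfield: "is_subfield K"
  using prime_power card_UNIV by (rule is_subfield_Fsub)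

lemma a_nonzero: "a \<noteq> 0"
  using primitive by (rule primitive_elem_nonzero)

lemma pow_eq_1_iff: "a ^ e = 1 \<longleftrightarrow> (q ^ n - 1) dvd e"
  using primitive_elem_pow_eq_1_iff[OF primitive] card_UNIV by simp

lemma q_pow_n_eq: "q ^ n = (q ^ m) ^ (n div m)"
  using m_dvd_n by (simp flip: power_mult)

lemma q_pow_m_minus_1_dvd: "(q ^ m - 1) dvd (q ^ n - 1)"
proof -
  have "[q ^ m = 1] (mod q ^ m - 1)"
    using q_pow_m_ge_2 by (simp add: cong_def mod_if)
  then have "[(q ^ m) ^ (n div m) = 1] (mod q ^ m - 1)"
    using cong_pow by fastforce
  then show ?thesis
    using cong_to_1_nat q_pow_n_eq by simp
qed

lemma T_mult: "T * (q ^ m - 1) = q ^ n - 1"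
  using q_pow_m_minus_1_dvd by simp

lemma q_pow_n_minus_1_pos: "q ^ n - 1 > 0"
proof -
  have "card {0, 1 :: 'a} \<le> card (UNIV :: 'a set)"
    by (rule card_mono) auto
  then show ?thesis
    using card_UNIV by simp
qed

lemma T_pos: "T > 0"
  using T_mult q_pow_n_minus_1_pos by (cases T) auto

lemma pow_in_K_iff: "a ^ k \<in> K \<longleftrightarrow> T dvd k"
proof -
  have "a ^ k \<in> K \<longleftrightarrow> a ^ k * a ^ (k * (q ^ m - 1)) = a ^ k"
    using q_pow_m_ge_2
    by (simp add: Fsub_def flip: power_mult power_add) (simp add: algebra_simps)
  also have "\<dots> \<longleftrightarrow> a ^ (k * (q ^ m - 1)) = 1"
    using a_nonzero by simp
  also have "\<dots> \<longleftrightarrow> T * (q ^ m - 1) dvd k * (q ^ m - 1)"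
    unfolding pow_eq_1_iff T_mult ..
  also have "\<dots> \<longleftrightarrow> T dvd k"
    using q_pow_m_ge_2 by simp
  finally show ?thesis .
qed

lemma card_K: "card K = q ^ m"
proof -
  have "K = insert 0 ((\<lambda>t. a ^ (T * t)) ` {..<q ^ m - 1})"
  proof (intro subset_antisym subsetI)
    fix x assume x: "x \<in> K"
    show "x \<in> insert 0 ((\<lambda>t. a ^ (T * t)) ` {..<q ^ m - 1})"
    proof (cases "x = 0")
      case False
      then obtain k where k: "x = a ^ k"
        by (rule primitive_elem_powE[OF primitive])
      have "x = a ^ (k mod (q ^ n - 1))"
        using k pow_eq_1_iff by (simp add: power_eq_power_mod[of a "q ^ n - 1" k])
      moreover have "T dvd k mod (q ^ n - 1)"
        using x calculation pow_in_K_iff by simp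
      then obtain t where t: "k mod (q ^ n - 1) = T * t" ..
      moreover have "T * t < T * (q ^ m - 1)"
        using t T_mult q_pow_n_minus_1_pos by (metis mod_less_divisor)
      ultimately show ?thesis
        by auto
    qed simp
  qed (auto simp: pow_in_K_iff subfield_zero[OF K_subfield])
  moreover have "inj_on (\<lambda>t. a ^ (T * t)) {..<q ^ m - 1}"
  proof (rule linorder_inj_onI)
    fix i j assume ij: "i < j" "j \<in> {..<q ^ m - 1}"
    have "a ^ (T * j) = a ^ (T * i) * a ^ (T * (j - i))"
      using ij(1) by (simp flip: power_add add_mult_distrib2)
    moreover have "\<not> (q ^ m - 1) dvd (j - i)"
      using ij by (auto dest: dvd_imp_le)
    then have "\<not> (q ^ n - 1) dvd T * (j - i)"
      using T_mult T_pos by (metis dvd_times_left_cancel_iff mult.commute not_gr0)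
    ultimately show "a ^ (T * i) \<noteq> a ^ (T * j)"
      using a_nonzero pow_eq_1_iff by auto
  qed auto
  moreover have "0 \<notin> (\<lambda>t. a ^ (T * t)) ` {..<q ^ m - 1}"
    using a_nonzero by auto
  ultimately show ?thesis
    using q_pow_m_ge_2 by (simp add: card_image)
qed

lemma scale_pow_mod_T:
  assumes "scalar_closed K V"
  shows "scale (a ^ j) V = scale (a ^ (j mod T)) V"
proof -
  have "a ^ j = a ^ (T * (j div T)) * a ^ (j mod T)"
    by (simp flip: power_add)
  moreover have "a ^ (T * (j div T)) \<in> K" "a ^ (T * (j div T)) \<noteq> 0"
    using pow_in_K_iff a_nonzero by auto
  ultimately show ?thesis
    using assms by (simp add: scale_mult_subfield_elem)
qed

lemma Orb_eq_image_lessThan: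
  assumes "\<forall>V\<in>set G. scalar_closed K V"
  shows "Orb a G = (\<lambda>j. map (scale (a ^ j)) G) ` {..<T}"
proof -
  have mod_T: "map (scale (a ^ j)) G = map (scale (a ^ (j mod T))) G" for j
    using assms by (intro map_cong refl scale_pow_mod_T) auto
  have "map (scale (a ^ j)) G \<in> (\<lambda>j. map (scale (a ^ j)) G) ` {..<T}" for j
    using mod_less_divisor[OF T_pos, of j] by (subst mod_T) (rule image_eqI[of _ _ "j mod T"], simp_all)
  then show ?thesis
    unfolding Orb_eq_image_scale by auto
qed

lemma card_Orb_le:
  assumes "\<forall>V\<in>set G. scalar_closed K V"
  shows "card (Orb a G) \<le> T"
  unfolding Orb_eq_image_lessThan[OF assms] by (metis card_image_le card_lessThan finite_lessThan)

lemma T_ge_2: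
  assumes "m < n"
  shows "T \<ge> 2"
proof (rule ccontr)
  assume "\<not> T \<ge> 2"
  then have "T = 1"
    using T_pos by simp
  then have "q ^ m - 1 = q ^ n - 1"
    using T_mult by simp
  then have "q ^ m = q ^ n"
    using q_pow_m_ge_2 q_pow_n_minus_1_pos by simp
  then show False
    using assms q_ge_2 by simp
qed

lemma inj_on_orbit_map:
  assumes "K \<in> set G"
  shows "inj_on (\<lambda>j. map (scale (a ^ j)) G) {..<T}"
proof (rule linorder_inj_onI)
  fix i j assume ij: "i < j" "j \<in> {..<T}"
  show "map (scale (a ^ i)) G \<noteq> map (scale (a ^ j)) G"
  proof
    assume "map (scale (a ^ i)) G = map (scale (a ^ j)) G"
    then have "scale (a ^ j) K = scale (a ^ i) K"
      using assms by (metis map_eq_conv)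
    then have "1 * (a ^ j / a ^ i) \<in> K"
      using subfield_one[OF K_subfield] a_nonzero by (intro scale_eq_imp_closed) auto
    moreover have "a ^ j / a ^ i = a ^ (j - i)"
      using ij(1) a_nonzero by (simp add: power_diff)
    ultimately show False
      using ij pow_in_K_iff by (auto dest: dvd_imp_le)
  qed
qed auto

lemma card_Orb_eq:
  assumes "\<forall>V\<in>set G. scalar_closed K V" and "K \<in> set G"
  shows "card (Orb a G) = T"
  unfolding Orb_eq_image_lessThan[OF assms(1)] using inj_on_orbit_map[OF assms(2)]
  by (simp add: card_image)

lemma card_Orb_le_if_best_friend: "best_friend K G \<Longrightarrow> card (Orb a G) \<le> T"
  using card_Orb_le unfolding best_friend_def scalar_closed_def by blast

lemma subspace_dist_scale_K:
  assumes u: "u \<noteq> 0" and v: "v \<noteq> 0" and uv: "u / v \<notin> K"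
  shows "subspace_dist q (scale u K) (scale v K) = 2 * m"
proof -
  have V: "subspace_over K (scale v K)"
    using subspace_over_scale subspace_over_subfield K_subfield by blast
  have u_notin: "u \<notin> scale v K"
    using uv v unfolding scale_def by auto
  have "card (ssum (scale u K) (scale v K)) = card (ssum (scale v K) (scale u K))"
    by (simp add: ssum_commute)
  then have "card (ssum (scale u K) (scale v K)) = q ^ (2 * m)"
    using card_ssum_scale_subfield[OF K_subfield V u_notin] card_scale[OF v] card_K
    by (simp add: mult_2 power_add)
  moreover have "scale u K \<inter> scale v K = {0}"
    using inter_scale_subfield_eq_zero[OF K_subfield V u_notin] by blast
  ultimately have "sdim q (ssum (scale u K) (scale v K)) = 2 * m" "sdim q (scale u K \<inter> scale v K) = 0"
    by (auto intro: sdim_eqI[OF q_ge_2])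
  then show ?thesis
    unfolding subspace_dist_def by simp
qed

lemma subspace_dist_scale_hyperplane:
  assumes W: "subspace_over K W" and card_W: "card W = q ^ (n - m)" and m_le: "2 * m \<le> n"
    and u: "u \<noteq> 0" and v: "v \<noteq> 0" and uv: "u / v \<notin> K"
  shows "subspace_dist q (scale u W) (scale v W) = 2 * m"
proof -
  let ?U = "scale u W" and ?V = "scale v W"
  have card_UNIV_W: "card (UNIV :: 'a set) = card K * card W"
    using card_UNIV card_K card_W m_le by (simp flip: power_add)
  have U: "subspace_over K ?U" and V: "subspace_over K ?V"
    using W by (auto intro: subspace_over_scale)
  have card_U: "card ?U = card W" and card_V: "card ?V = card W"
    using card_scale u v by auto
  have "?U \<noteq> ?V"
  proof
    assume "?U = ?V"
    then have "\<forall>y\<in>W. y * (u / v) \<in> W"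
      using scale_eq_imp_closed v by blast
    then show False
      using hyperplane_not_mult_closed[OF K_subfield W card_UNIV_W uv] by blast
  qed
  then have sum_UNIV: "ssum ?U ?V = UNIV"
    using card_UNIV_W card_U card_V
    by (intro ssum_distinct_hyperplanes[OF K_subfield U V]) (auto simp: mult.commute)
  have "card (ssum ?U ?V) * card (?U \<inter> ?V) = card ?U * card ?V"
    using U V by (intro card_ssum_mult_card_inter_subspace_over[OF K_subfield]) auto
  moreover have "(n - m) + (n - m) = n + (n - 2 * m)"
    using m_le by simp
  ultimately have "q ^ n * card (?U \<inter> ?V) = q ^ n * q ^ (n - 2 * m)"
    using sum_UNIV card_UNIV card_U card_V card_W by (metis power_add)
  then have "card (?U \<inter> ?V) = q ^ (n - 2 * m)"
    using q_ge_2 by simp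
  then show ?thesis
    unfolding subspace_dist_def sum_UNIV using q_ge_2 card_UNIV m_le by (simp add: sdim_eqI)
qed

end

locale pow_span_flags = primitive_field_ext +
  fixes l :: nat
  assumes minpoly_degree: "minpoly_degree (Fsub q m) (a ^ l) = n div m"
begin

abbreviation s :: nat where
  "s \<equiv> n div m"

abbreviation P :: "nat \<Rightarrow> 'a set" where
  "P \<equiv> pow_span K a l"

lemma s_le_degree:
  assumes "p \<noteq> 0" and "\<forall>i. Polynomial.coeff p i \<in> K" and "poly p (a ^ l) = 0"
  shows "s \<le> degree p"
proof -
  have "minpoly_degree K (a ^ l) \<le> degree p"
    unfolding minpoly_degree_def by (rule Least_le) (use assms in auto)
  then show ?thesis
    using minpoly_degree by simp
qed

lemma powers_independent:
  assumes t: "t \<le> s" and c: "\<forall>j<t. c j \<in> K" and d: "\<forall>j<t. d j \<in> K"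
    and eq: "(\<Sum>j<t. c j * (a ^ l) ^ j) = (\<Sum>j<t. d j * (a ^ l) ^ j)" and j: "j < t"
  shows "c j = d j"
proof -
  define p where "p = (\<Sum>i<t. Polynomial.monom (c i - d i) i)"
  have coeff_p: "Polynomial.coeff p i = (if i < t then c i - d i else 0)" for i
    unfolding p_def coeff_sum by (simp add: coeff_monom)
  have "poly p (a ^ l) = (\<Sum>i<t. c i * (a ^ l) ^ i) - (\<Sum>i<t. d i * (a ^ l) ^ i)"
    unfolding p_def poly_sum by (simp add: poly_monom algebra_simps sum_subtractf)
  then have root: "poly p (a ^ l) = 0"
    using eq by simp
  have "\<forall>i. Polynomial.coeff p i \<in> K"
    using c d subfield_diff[OF K_subfield] subfield_zero[OF K_subfield] by (simp add: coeff_p)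
  moreover have "degree p < s"
    using t j by (intro le_less_trans[OF degree_le[of "t - 1"]]) (auto simp: coeff_p)
  ultimately have "p = 0"
    using s_le_degree root by (meson not_le)
  then show ?thesis
    using coeff_p[of j] j by simp
qed

lemma power_notin_pow_span:
  assumes "t < s"
  shows "(a ^ l) ^ t \<notin> P t"
proof
  assume "(a ^ l) ^ t \<in> P t"
  then obtain c where c: "\<forall>j. c j \<in> K" "(a ^ l) ^ t = (\<Sum>j<t. c j * (a ^ l) ^ j)"
    unfolding pow_span_eq by blast
  define c' where "c' j = (if j < t then c j else 0)" for j
  define e where "e j = (if j = t then 1 else 0 :: 'a)" for j
  have "(\<Sum>j<Suc t. c' j * (a ^ l) ^ j) = (\<Sum>j<Suc t. e j * (a ^ l) ^ j)"
    using c(2) by (simp add: c'_def e_def)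
  moreover have "\<forall>j<Suc t. c' j \<in> K" "\<forall>j<Suc t. e j \<in> K"
    using c(1) subfield_zero[OF K_subfield] subfield_one[OF K_subfield]
    by (simp_all add: c'_def e_def)
  ultimately have "c' t = e t"
    using assms by (auto intro: powers_independent[of "Suc t" c' e t])
  then show False
    by (simp add: c'_def e_def)
qed

lemma card_pow_span:
  assumes "t \<le> s"
  shows "card (P t) = q ^ (m * t)"
proof -
  define f where "f c = (\<Sum>j<t. c j * (a ^ l) ^ j)" for c
  have "P t = f ` (PiE {..<t} (\<lambda>_. K))"
  proof (intro subset_antisym subsetI)
    fix x assume "x \<in> P t"
    then obtain c where c: "\<forall>j. c j \<in> K" "x = f c"
      unfolding pow_span_eq f_def by blast
    moreover have "f (restrict c {..<t}) = f c"
      unfolding f_def by (rule sum.cong) auto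
    ultimately have "x = f (restrict c {..<t})"
      by simp
    moreover have "restrict c {..<t} \<in> PiE {..<t} (\<lambda>_. K)"
      using c by auto
    ultimately show "x \<in> f ` (PiE {..<t} (\<lambda>_. K))"
      by blast
  next
    fix x assume "x \<in> f ` (PiE {..<t} (\<lambda>_. K))"
    then obtain c where c: "c \<in> PiE {..<t} (\<lambda>_. K)" "x = f c"
      by blast
    define c' where "c' j = (if j < t then c j else 0)" for j
    have "\<forall>j. c' j \<in> K"
      using c subfield_zero[OF K_subfield] by (auto simp: c'_def)
    moreover have "x = (\<Sum>j<t. c' j * (a ^ l) ^ j)"
      unfolding c f_def by (intro sum.cong) (auto simp: c'_def)
    ultimately show "x \<in> P t"
      unfolding pow_span_eq by blast
  qed
  moreover have "inj_on f (PiE {..<t} (\<lambda>_. K))"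
  proof (rule inj_onI)
    fix c d assume c: "c \<in> PiE {..<t} (\<lambda>_. K)" and d: "d \<in> PiE {..<t} (\<lambda>_. K)" and "f c = f d"
    moreover have "\<forall>j<t. c j \<in> K" "\<forall>j<t. d j \<in> K"
      using c d by auto
    ultimately have "c j = d j" if "j \<in> {..<t}" for j
      using powers_independent[OF assms, of c d j] that unfolding f_def by auto
    then show "c = d"
      by (rule PiE_ext[OF c d])
  qed
  ultimately show ?thesis
    by (simp add: card_image card_PiE card_K power_mult)
qed

lemma pow_span_is_subfield_iff:
  assumes "1 \<le> t" and "t < s"
  shows "is_subfield (P t) \<longleftrightarrow> t = 1"
proof
  assume subfield: "is_subfield (P t)"
  show "t = 1"
  proof (rule ccontr)
    assume "t \<noteq> 1"
    then have "a ^ l \<in> P t" and "(a ^ l) ^ (t - 1) \<in> P t"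
      using assms subfield_zero[OF K_subfield] subfield_one[OF K_subfield]
        power_in_pow_span[of K "t - 1" t a l] power_in_pow_span[of K 1 t a l]
      by auto
    then have "(a ^ l) ^ (t - 1) * a ^ l \<in> P t"
      using subfield_mult[OF subfield] by blast
    moreover have "(a ^ l) ^ (t - 1) * a ^ l = (a ^ l) ^ t"
      using assms(1) by (simp flip: power_Suc2)
    ultimately show False
      using power_notin_pow_span assms(2) by simp
  qed
qed (use K_subfield pow_span_1[OF subfield_zero[OF K_subfield]] in simp)

lemma is_subspace_pow_span: "is_subspace q (P t)"
  using subspace_over_pow_span[OF K_subfield, of a l t] Fsub_1_subset[of q m]
  unfolding is_subspace_def subspace_over_def scalar_closed_def by blast

lemma is_flag_map_pow_span:
  assumes sorted: "sorted_wrt (<) ss" and ne: "ss \<noteq> []"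
    and first: "ss ! 0 \<ge> 1" and last: "last ss < s"
  shows "is_flag q (map P ss)"
  unfolding is_flag_def
proof (intro conjI)
  have range: "1 \<le> x \<and> x < s" if "x \<in> set ss" for x
    using strict_sorted_nth_0_le_le_last[OF sorted that] first last by auto
  have "1 \<in> P (ss ! 0)"
    using power_in_pow_span[of K 0 "ss ! 0" a l] subfield_zero[OF K_subfield]
      subfield_one[OF K_subfield] first by simp
  then have "P (ss ! 0) \<noteq> {0}"
    by auto
  moreover have "0 \<in> P (ss ! 0)"
    using subspace_over_pow_span[OF K_subfield] by (simp add: subspace_over_def)
  ultimately have "{0} \<subset> P (ss ! 0)"
    by auto
  then show "{0} \<subset> hd (map P ss)"
    using ne by (simp add: hd_map hd_conv_nth)
  show "last (map P ss) \<subset> UNIV"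
    using power_notin_pow_span last ne by (auto simp: last_map)
  show "sorted_wrt (\<subset>) (map P ss)"
    unfolding sorted_wrt_map
  proof (rule sorted_wrt_mono_rel[OF _ sorted])
    fix x y assume "x \<in> set ss" "y \<in> set ss" "x < y"
    then show "P x \<subset> P y"
      using pow_span_mono[of K x y a l] power_in_pow_span[of K x y a l] power_notin_pow_span[of x]
        range subfield_zero[OF K_subfield] subfield_one[OF K_subfield] by auto
  qed
qed (use ne is_subspace_pow_span in auto)

lemma gen_galois_flag_map_pow_span_iff:
  assumes sorted: "sorted_wrt (<) ss" and len: "length ss \<ge> 2"
    and first: "ss ! 0 \<ge> 1" and last: "last ss < s"
  shows "gen_galois_flag q (map P ss) \<longleftrightarrow> ss ! 0 = 1"
proof -
  have bounds: "ss ! 0 \<le> x \<and> x \<le> last ss" if "x \<in> set ss" for x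
    using strict_sorted_nth_0_le_le_last[OF sorted that] .
  have subfield_iff: "is_subfield (P x) \<longleftrightarrow> x = 1" if "x \<in> set ss" for x
    using pow_span_is_subfield_iff bounds[OF that] first last by simp
  have "ss ! 0 < ss ! 1"
    using sorted_wrt_nth_less[OF sorted, of 0 1] len by simp
  then have last_ge_2: "last ss \<ge> 2"
    using bounds[of "ss ! 1"] first len by simp
  have ne: "ss \<noteq> []"
    using len by auto
  then have mem: "ss ! 0 \<in> set ss" "last ss \<in> set ss"
    by (simp_all add: nth_mem)
  show ?thesis
  proof
    assume "gen_galois_flag q (map P ss)"
    then obtain x where "x \<in> set ss" "is_subfield (P x)"
      unfolding gen_galois_flag_def by auto
    then show "ss ! 0 = 1"
      using subfield_iff bounds first by fastforce
  next
    assume "ss ! 0 = 1"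
    then have "is_subfield (P (ss ! 0))"
      using subfield_iff[OF mem(1)] by simp
    then have "\<exists>V\<in>set (map P ss). is_subfield V"
      using mem(1) by auto
    moreover have "\<not> is_subfield (P (last ss))"
      using subfield_iff[OF mem(2)] last_ge_2 by simp
    then have "\<exists>V\<in>set (map P ss). \<not> is_subfield V"
      using mem(2) by auto
    moreover have "\<forall>U\<in>set (map P ss). \<forall>V\<in>set (map P ss).
        is_subfield U \<and> is_subfield V \<longrightarrow> U \<subseteq> V \<or> V \<subseteq> U"
      using subfield_iff by auto
    ultimately show "gen_galois_flag q (map P ss)"
      unfolding gen_galois_flag_def using is_flag_map_pow_span[OF sorted ne first last] by blast
  qed
qed

lemma two_m_le_n: "s \<ge> 2 \<Longrightarrow> 2 * m \<le> n"
  using m_dvd_n by (metis dvd_mult_div_cancel mult.commute mult_le_mono2)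

lemma hyperplane_flag_scalar_closed: "\<forall>V\<in>set [K, P (s - 1)]. scalar_closed K V"
  using subspace_over_pow_span[OF K_subfield] subspace_over_subfield[OF K_subfield]
  by (auto simp: subspace_over_def)

lemma flag_type_Orb_hyperplane_flag:
  assumes "G \<in> Orb a [K, P (s - 1)]"
  shows "flag_type q G = [m, n - m]"
proof -
  obtain j where G: "G = map (scale (a ^ j)) [K, P (s - 1)]"
    using assms unfolding Orb_eq_image_scale by blast
  have "card (P (s - 1)) = q ^ (n - m)"
    using card_pow_span[of "s - 1"] m_dvd_n by (simp add: diff_mult_distrib2)
  then have "sdim q (scale (a ^ j) (P (s - 1))) = n - m"
    using a_nonzero by (intro sdim_eqI[OF q_ge_2]) (simp add: card_scale)
  moreover have "sdim q (scale (a ^ j) K) = m"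
    using a_nonzero by (intro sdim_eqI[OF q_ge_2]) (simp add: card_scale card_K)
  ultimately show ?thesis
    unfolding G flag_type_def by simp
qed

lemma flag_dist_Orb_hyperplane_flag:
  assumes s: "s \<ge> 2" and G: "G \<in> Orb a [K, P (s - 1)]" and H: "H \<in> Orb a [K, P (s - 1)]"
    and ne: "G \<noteq> H"
  shows "flag_dist q G H = 4 * m"
proof -
  obtain i j where G: "G = map (scale (a ^ i)) [K, P (s - 1)]"
    and H: "H = map (scale (a ^ j)) [K, P (s - 1)]"
    using assms unfolding Orb_eq_image_scale by blast
  have div: "a ^ i / a ^ j \<notin> K"
    using map_scale_eq_if_div_mem[OF hyperplane_flag_scalar_closed] ne a_nonzero unfolding G H by auto
  have "card (P (s - 1)) = q ^ (n - m)"
    using card_pow_span[of "s - 1"] m_dvd_n by (simp add: diff_mult_distrib2)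
  then have "subspace_dist q (scale (a ^ i) (P (s - 1))) (scale (a ^ j) (P (s - 1))) = 2 * m"
    using subspace_over_pow_span[OF K_subfield] a_nonzero div two_m_le_n[OF s]
    by (intro subspace_dist_scale_hyperplane) auto
  moreover have "subspace_dist q (scale (a ^ i) K) (scale (a ^ j) K) = 2 * m"
    using a_nonzero div by (intro subspace_dist_scale_K) auto
  ultimately show ?thesis
    unfolding G H flag_dist_def by (simp add: numeral_eq_Suc)
qed

lemma min_dist_Orb_hyperplane_flag:
  assumes s: "s \<ge> 2"
  shows "min_dist q (Orb a [K, P (s - 1)]) = 4 * m"
proof -
  have "m < n"
    using two_m_le_n[OF s] m_pos by simp
  then have neq: "map (scale (a ^ 0)) [K, P (s - 1)] \<noteq> map (scale (a ^ 1)) [K, P (s - 1)]"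
    using T_ge_2 by (intro inj_on_contraD[OF inj_on_orbit_map zero_neq_one]) auto
  have mem: "map (scale (a ^ j)) [K, P (s - 1)] \<in> Orb a [K, P (s - 1)]" for j
    unfolding Orb_eq_image_scale by (rule rangeI)
  show ?thesis
    by (rule min_dist_eqI[OF flag_dist_Orb_hyperplane_flag[OF s] mem mem neq])
qed

end

theorem mainTheorem7:
  fixes a :: "'a::{finite,field}" and q n m l r :: nat and ss :: "nat list"
  assumes "prime_power q" and "n > 0" and "m > 0" and "m dvd n" and "card (UNIV::'a set) = q ^ n"
    and "primitive_elem a"
    and "1 \<le> l" and "l < (q ^ n - 1) div (q ^ m - 1)"
    and "length ss = r" and "r \<ge> 2" and "ss ! 0 \<ge> 1" and "sorted_wrt (<) ss" and "last ss < n div m"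
    and "minpoly_degree (Fsub q m) (a ^ l) = n div m"
  shows "(gen_galois_flag q (the_flag q m a l ss) \<longleftrightarrow> ss ! 0 = 1)
    \<and> (r = 2 \<and> ss ! 0 = 1 \<and> ss ! 1 = minpoly_degree (Fsub q m) (a ^ l) - 1 \<longrightarrow>
         gen_galois_flag q (the_flag q m a l ss)
       \<and> optimum_distance_flag_code q n (Orb a (the_flag q m a l ss)) [m, n - m]
       \<and> min_dist q (Orb a (the_flag q m a l ss)) = 4 * m
       \<and> card (Orb a (the_flag q m a l ss)) = (q ^ n - 1) div (q ^ m - 1)
       \<and> best_friend (Fsub q m) (the_flag q m a l ss)
       \<and> (\<forall>G::'a set list. is_flag q G \<and> best_friend (Fsub q m) G \<longrightarrow>
            card (Orb a G) \<le> (q ^ n - 1) div (q ^ m - 1)))"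
proof -
  interpret pow_span_flags a q n m l
    using assms by unfold_locales auto
  have "gen_galois_flag q (the_flag q m a l ss) \<longleftrightarrow> ss ! 0 = 1"
    unfolding the_flag_def using assms by (intro gen_galois_flag_map_pow_span_iff) auto
  moreover have "optimum_distance_flag_code q n (Orb a (the_flag q m a l ss)) [m, n - m]
       \<and> min_dist q (Orb a (the_flag q m a l ss)) = 4 * m
       \<and> card (Orb a (the_flag q m a l ss)) = T
       \<and> best_friend K (the_flag q m a l ss)"
    if "r = 2" and "ss ! 0 = 1" and "ss ! 1 = s - 1"
  proof -
    have "ss = [1, s - 1]"
      using that assms(9) by (auto simp: numeral_2_eq_2 length_Suc_conv)
    then have flag: "the_flag q m a l ss = [K, P (s - 1)]"
      unfolding the_flag_def using pow_span_1[OF subfield_zero[OF K_subfield]] by simp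
    have "s \<ge> 2"
      using \<open>ss = [1, s - 1]\<close> assms(12) by simp
    then show ?thesis
      unfolding flag optimum_distance_flag_code_def
      using flag_type_Orb_hyperplane_flag min_dist_Orb_hyperplane_flag odfc_bound_two_step two_m_le_n
        card_Orb_eq[OF hyperplane_flag_scalar_closed] best_friend_if_subfield_mem[OF K_subfield hyperplane_flag_scalar_closed]
      by auto
  qed
  ultimately show ?thesis
    using card_Orb_le_if_best_friend assms(14) by auto
qed

end
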